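(* Let $n\in\mathbb{N}$, let $\mathbf{s}=(s_0,\ldots,s_n)\subset[0,\infty)$ be strictly positive on $(0,\infty)$ and let $s_{-1}\in[0,\infty)$. Then the sequence $\mathbf{s}'=(s_{-1},s_0,\ldots,s_n)$ (viewed as a sequence of length $n+2$ with $s_{-1}$ as its zeroth term) is strictly positive on $(0,\infty)$ if and only if $s_{-1}\in(t_\infty(\mathbf{s}),\infty)$.
   Context: For $a<b$ and $\mathbf{s}=(s_0,\ldots,s_n)$ let $\sigma(x^k)=s_k$ define a linear functional on real polynomials of degree $\le n$. $\mathbf{s}$ is positive on $[a,b]$ if $\sigma(P)\ge0$ for every such $P$ nonnegative on $[a,b]$, strictly positive if moreover $\sigma(P)>0$ for every such $P\not\equiv0$. Strictly positive on $(0,\infty)$ means strictly positive on some $[a,b]\subset(0,\infty)$. $\mathcal{M}_{a,b}(\mathbf{s})$ is the set of positive Borel measures on $[a,b]$ with $k$-th moments $s_k$ ($k=0,\ldots,n$); $t_{a,b}(\mathbf{s})=\inf\{\int_{[a,b]}\frac1t\,d\mu:\mu\in\mathcal{M}_{a,b}(\mathbf{s})\}$ with $\inf\varnothing=\infty$, and $t_\infty(\mathbf{s})=\inf_{0<a<b}t_{a,b}(\mathbf{s})$. *)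

theory Defs
  imports "HOL-Probability.Probability" "HOL-Computational_Algebra.Polynomial"
begin

text \<open>A sequence s = (s_0,...,s_n) is modelled as s :: nat => real together with n;
  only the values s 0, ..., s n matter.\<close>

definition riesz :: "nat \<Rightarrow> (nat \<Rightarrow> real) \<Rightarrow> real poly \<Rightarrow> real" where
  "riesz n s P = (\<Sum>k\<le>n. coeff P k * s k)"

definition positive_on :: "nat \<Rightarrow> (nat \<Rightarrow> real) \<Rightarrow> real \<Rightarrow> real \<Rightarrow> bool" where
  "positive_on n s a b \<longleftrightarrow>
     (\<forall>P. degree P \<le> n \<and> (\<forall>x\<in>{a..b}. 0 \<le> poly P x) \<longrightarrow> 0 \<le> riesz n s P)"

definition strictly_positive_on :: "nat \<Rightarrow> (nat \<Rightarrow> real) \<Rightarrow> real \<Rightarrow> real \<Rightarrow> bool" where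
  "strictly_positive_on n s a b \<longleftrightarrow> positive_on n s a b \<and>
     (\<forall>P. degree P \<le> n \<and> (\<forall>x\<in>{a..b}. 0 \<le> poly P x) \<and> P \<noteq> 0 \<longrightarrow> 0 < riesz n s P)"

definition strictly_positive_pos_reals :: "nat \<Rightarrow> (nat \<Rightarrow> real) \<Rightarrow> bool" where
  "strictly_positive_pos_reals n s \<longleftrightarrow>
     (\<exists>a b. 0 < a \<and> a < b \<and> strictly_positive_on n s a b)"

definition moment_measures :: "nat \<Rightarrow> (nat \<Rightarrow> real) \<Rightarrow> real \<Rightarrow> real \<Rightarrow> real measure set" where
  "moment_measures n s a b =
     {\<mu>. sets \<mu> = sets borel \<and> emeasure \<mu> (- {a..b}) = 0 \<and>
          (\<forall>k\<le>n. integrable \<mu> (\<lambda>x. x ^ k) \<and> (\<integral>x. x ^ k \<partial>\<mu>) = s k)}"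

definition t_ab :: "nat \<Rightarrow> (nat \<Rightarrow> real) \<Rightarrow> real \<Rightarrow> real \<Rightarrow> ennreal" where
  "t_ab n s a b = Inf ((\<lambda>\<mu>. \<integral>\<^sup>+x\<in>{a..b}. ennreal (1 / x) \<partial>\<mu>) ` moment_measures n s a b)"

definition t_inf :: "nat \<Rightarrow> (nat \<Rightarrow> real) \<Rightarrow> ennreal" where
  "t_inf n s = (INF ab\<in>{(a, b). 0 < a \<and> a < b}. t_ab n s (fst ab) (snd ab))"

definition prepend_seq :: "real \<Rightarrow> (nat \<Rightarrow> real) \<Rightarrow> nat \<Rightarrow> real" where
  "prepend_seq c s k = (if k = 0 then c else s (k - 1))"

end

theory Submission
  imports Defs "Jordan_Normal_Form.Determinant"
begin

text \<open>
  If s' = (s_{-1}, s) is strictly positive on [a,b] \<subseteq> (0,\<infinity>), lowering s_{-1} by some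
  e > 0 keeps it positive there (strict positivity is an interior condition, by compactness
  of normalised coefficient vectors). A positive functional on [a,b] is the moment functional
  of a measure with finitely many atoms: the nearest point of the closed cone of atomic moment
  vectors has, by the first-order conditions, a difference vector whose polynomial is
  nonnegative on [a,b], and positivity forces that difference to vanish. Reweighting the atoms
  by x turns this measure into one with moments s and \<integral>1/x = s_{-1} - e, so t_\<infinity>(s) < s_{-1}.

  Conversely, a measure \<mu> on [a,b] with moments s and \<integral>1/x d\<mu> = c < s_{-1} makes (c, s)
  positive on [a,b], since \<integral>Q(x)/x d\<mu> \<ge> 0. For Q \<ge> 0 on [0,B], the functional of s' at Q is
  (s_{-1} - c) Q(0) plus that nonnegative value; if Q(0) = 0 then Q = x R and the value is the
  functional of s at R, which is positive by strict positivity of s. Hence s' is strictly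
  positive on [0,B], and by compactness again on [a',B] for some small a' > 0.
\<close>

section \<open>Polynomials of bounded degree\<close>

lemma bounded_seqs_common_convergent_subseq:
  fixes f :: "nat \<Rightarrow> nat \<Rightarrow> real"
  assumes "\<And>k. k < M \<Longrightarrow> bounded (range (f k))"
  obtains r l where "strict_mono r" "\<And>k. k < M \<Longrightarrow> (\<lambda>j. f k (r j)) \<longlonglongrightarrow> l k"
  using assms
proof (induction M arbitrary: thesis)
  case 0
  show ?case by (rule "0.prems"(1)[of id]) (auto simp: strict_mono_def)
next
  case (Suc M)
  obtain r l where r: "strict_mono r" and l: "\<And>k. k < M \<Longrightarrow> (\<lambda>j. f k (r j)) \<longlonglongrightarrow> l k"
    using Suc.IH Suc.prems(2) by (metis less_SucI)
  have "bounded (range (\<lambda>j. f M (r j)))"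
    using Suc.prems(2)[of M] by (rule bounded_subset) auto
  then obtain lM r' where r': "strict_mono r'" and lM: "((\<lambda>j. f M (r j)) \<circ> r') \<longlonglongrightarrow> lM"
    using bounded_imp_convergent_subsequence by blast
  show ?case
  proof (rule Suc.prems(1))
    show "strict_mono (r \<circ> r')" using r r' by (rule strict_mono_o)
    fix k assume "k < Suc M"
    then consider "k < M" | "k = M" by linarith
    then show "(\<lambda>j. f k ((r \<circ> r') j)) \<longlonglongrightarrow> (l(M := lM)) k"
    proof cases
      case 1
      then show ?thesis
        using LIMSEQ_subseq_LIMSEQ[OF l r'] by (simp add: o_def)
    qed (use lM in \<open>simp add: o_def\<close>)
  qed
qed

lemma Inf_image_approximating_seq:
  fixes D :: "'a \<Rightarrow> real"
  assumes "x \<in> K" "bdd_below (D ` K)"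
  obtains C where "\<And>j. C j \<in> K" "(\<lambda>j. D (C j)) \<longlonglongrightarrow> Inf (D ` K)"
proof -
  have "Inf (D ` K) \<in> closure (D ` K)"
    using assms by (intro closure_contains_Inf) auto
  then obtain y where "\<forall>j. y j \<in> D ` K" and y: "y \<longlonglongrightarrow> Inf (D ` K)"
    unfolding closure_sequential by blast
  then have "\<forall>j. \<exists>c. c \<in> K \<and> y j = D c" by blast
  then obtain C where C: "\<forall>j. C j \<in> K \<and> y j = D (C j)" by metis
  then have "y = (\<lambda>j. D (C j))" by auto
  then show thesis
    by (intro that[of C]) (use C y in auto)
qed

definition poly_of_coeffs :: "nat \<Rightarrow> (nat \<Rightarrow> real) \<Rightarrow> real poly" where
  "poly_of_coeffs m p = (\<Sum>k\<le>m. monom (p k) k)"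

lemma coeff_poly_of_coeffs: "coeff (poly_of_coeffs m p) k = (if k \<le> m then p k else 0)"
  unfolding poly_of_coeffs_def by (simp add: coeff_sum coeff_monom)

lemma degree_poly_of_coeffs: "degree (poly_of_coeffs m p) \<le> m"
  unfolding poly_of_coeffs_def
  by (rule degree_sum_le) (auto intro: order.trans[OF degree_monom_le])

lemma poly_eq_sum_coeff:
  fixes P :: "real poly"
  assumes "degree P \<le> m"
  shows "poly P x = (\<Sum>k\<le>m. coeff P k * x ^ k)"
  unfolding poly_altdef using assms
  by (intro sum.mono_neutral_left) (auto simp: coeff_eq_0)

lemma poly_poly_of_coeffs: "poly (poly_of_coeffs m p) x = (\<Sum>k\<le>m. p k * x ^ k)"
  by (simp add: poly_eq_sum_coeff[OF degree_poly_of_coeffs] coeff_poly_of_coeffs)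

lemma riesz_poly_of_coeffs: "riesz m s (poly_of_coeffs m p) = (\<Sum>k\<le>m. p k * s k)"
  unfolding riesz_def by (simp add: coeff_poly_of_coeffs)

lemma riesz_zero [simp]: "riesz m s 0 = 0"
  unfolding riesz_def by simp

lemma riesz_smult: "riesz m s (Polynomial.smult c P) = c * riesz m s P"
  unfolding riesz_def by (simp add: sum_distrib_left mult_ac)

lemma riesz_diff_scaled: "riesz m (\<lambda>k. s k - e * d k) P = riesz m s P - e * riesz m d P"
  unfolding riesz_def by (simp add: sum_subtractf sum_distrib_left algebra_simps)

lemma riesz_prepend_seq_pCons:
  "riesz (Suc n) (prepend_seq c s) (pCons q R) = q * c + riesz n s R"
  unfolding riesz_def prepend_seq_def sum.atMost_Suc_shift by simp

lemma poly_tendsto_of_coeff_tendsto: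
  fixes P :: "nat \<Rightarrow> real poly"
  assumes "\<And>j. degree (P j) \<le> m" "degree Q \<le> m" "\<And>k. (\<lambda>j. coeff (P j) k) \<longlonglongrightarrow> coeff Q k"
  shows "(\<lambda>j. poly (P j) x) \<longlonglongrightarrow> poly Q x"
  unfolding poly_eq_sum_coeff[OF assms(1)] poly_eq_sum_coeff[OF assms(2)]
  by (intro tendsto_intros assms(3))

lemma riesz_tendsto_of_coeff_tendsto:
  assumes "\<And>k. (\<lambda>j. coeff (P j) k) \<longlonglongrightarrow> coeff Q k"
  shows "(\<lambda>j. riesz m s (P j)) \<longlonglongrightarrow> riesz m s Q"
  unfolding riesz_def by (intro tendsto_intros assms)

lemma normalized_polys_convergent_subseq:
  fixes P :: "nat \<Rightarrow> real poly"
  assumes deg: "\<And>j. degree (P j) \<le> m" and norm: "\<And>j. (\<Sum>k\<le>m. \<bar>coeff (P j) k\<bar>) = 1"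
  obtains r Q where "strict_mono r" "degree Q \<le> m" "Q \<noteq> 0"
    "\<And>k. (\<lambda>j. coeff (P (r j)) k) \<longlonglongrightarrow> coeff Q k"
proof -
  have "\<bar>coeff (P j) k\<bar> \<le> 1" if "k \<le> m" for j k
    using member_le_sum[of k "{..m}" "\<lambda>k. \<bar>coeff (P j) k\<bar>"] norm[of j] that by simp
  then have "bounded (range (\<lambda>j. coeff (P j) k))" if "k < Suc m" for k
    using that by (intro boundedI[of _ 1]) auto
  then obtain r l where r: "strict_mono r" and l: "\<And>k. k < Suc m \<Longrightarrow> (\<lambda>j. coeff (P (r j)) k) \<longlonglongrightarrow> l k"
    using bounded_seqs_common_convergent_subseq[of "Suc m" "\<lambda>k j. coeff (P j) k"] by blast
  define Q where "Q = poly_of_coeffs m l"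
  have lim: "(\<lambda>j. coeff (P (r j)) k) \<longlonglongrightarrow> coeff Q k" for k
  proof (cases "k \<le> m")
    case False
    then have "coeff (P j) k = 0" for j using deg[of j] by (simp add: coeff_eq_0)
    then show ?thesis using False by (simp add: Q_def coeff_poly_of_coeffs)
  qed (use l in \<open>simp add: Q_def coeff_poly_of_coeffs\<close>)
  have "(\<lambda>j. \<Sum>k\<le>m. \<bar>coeff (P (r j)) k\<bar>) \<longlonglongrightarrow> (\<Sum>k\<le>m. \<bar>coeff Q k\<bar>)"
    by (intro tendsto_intros lim)
  then have "(\<Sum>k\<le>m. \<bar>coeff Q k\<bar>) = 1"
    by (simp add: norm LIMSEQ_const_iff)
  then have "Q \<noteq> 0" by auto
  show thesis
    by (rule that[OF r _ \<open>Q \<noteq> 0\<close> lim]) (simp add: Q_def degree_poly_of_coeffs)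
qed

lemma nonzero_polys_rescaled_limit:
  fixes P :: "nat \<Rightarrow> real poly"
  assumes deg: "\<And>j. degree (P j) \<le> m" and nz: "\<And>j. P j \<noteq> 0"
  obtains c r Q where "\<And>j. 0 < c j" "strict_mono r" "degree Q \<le> m" "Q \<noteq> 0"
    "\<And>x. (\<lambda>j. c j * poly (P (r j)) x) \<longlonglongrightarrow> poly Q x"
    "\<And>d. (\<lambda>j. c j * riesz m d (P (r j))) \<longlonglongrightarrow> riesz m d Q"
proof -
  define S where "S j = (\<Sum>k\<le>m. \<bar>coeff (P j) k\<bar>)" for j
  have S_pos: "0 < S j" for j
  proof -
    have "0 < \<bar>lead_coeff (P j)\<bar>" using nz by simp
    also have "\<dots> \<le> S j" unfolding S_def using deg by (intro member_le_sum) auto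
    finally show ?thesis .
  qed
  define N where "N j = Polynomial.smult (1 / S j) (P j)" for j
  have deg_N: "degree (N j) \<le> m" for j
    unfolding N_def by (rule order.trans[OF degree_smult_le deg])
  have norm_N: "(\<Sum>k\<le>m. \<bar>coeff (N j) k\<bar>) = 1" for j
  proof -
    have "(\<Sum>k\<le>m. \<bar>coeff (N j) k\<bar>) = (\<Sum>k\<le>m. \<bar>coeff (P j) k\<bar>) / S j"
      using S_pos[of j] by (simp add: N_def abs_mult sum_divide_distrib)
    then show ?thesis using S_pos[of j] by (simp add: S_def)
  qed
  obtain r Q where r: "strict_mono r" and Q: "degree Q \<le> m" "Q \<noteq> 0"
    and lim: "\<And>k. (\<lambda>j. coeff (N (r j)) k) \<longlonglongrightarrow> coeff Q k"
    using normalized_polys_convergent_subseq[of N m, OF deg_N norm_N] by blast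
  show thesis
  proof (rule that[of "\<lambda>j. 1 / S (r j)" r Q])
    show "(\<lambda>j. 1 / S (r j) * poly (P (r j)) x) \<longlonglongrightarrow> poly Q x" for x
      using poly_tendsto_of_coeff_tendsto[OF deg_N Q(1) lim] by (simp add: N_def)
    show "(\<lambda>j. 1 / S (r j) * riesz m d (P (r j))) \<longlonglongrightarrow> riesz m d Q" for d
      using riesz_tendsto_of_coeff_tendsto[OF lim] by (simp add: N_def riesz_smult)
  qed (use S_pos r Q in auto)
qed

lemma poly_nonneg_atLeastAtMost_if_greaterThanAtMost:
  fixes Q :: "real poly"
  assumes "a < b" "\<forall>x\<in>{a<..b}. 0 \<le> poly Q x"
  shows "\<forall>x\<in>{a..b}. 0 \<le> poly Q x"
proof -
  have "closed {x. 0 \<le> poly Q x}"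
    by (intro closed_Collect_le continuous_intros)
  then have "closure {a<..b} \<subseteq> {x. 0 \<le> poly Q x}"
    using assms(2) by (intro closure_minimal) auto
  then show ?thesis
    using closure_greaterThanAtMost[OF assms(1)] by auto
qed

section \<open>Strict positivity\<close>

lemma strictly_positive_onI:
  assumes "\<And>P. degree P \<le> m \<Longrightarrow> \<forall>x\<in>{a..b}. 0 \<le> poly P x \<Longrightarrow> P \<noteq> 0 \<Longrightarrow> 0 < riesz m s P"
  shows "strictly_positive_on m s a b"
  using assms unfolding strictly_positive_on_def positive_on_def
  by (metis less_imp_le order_refl riesz_zero)

lemma strictly_positive_on_imp_pos_0:
  assumes "strictly_positive_on m s a b"
  shows "0 < s 0"
proof -
  have "0 < riesz m s 1"
    using assms unfolding strictly_positive_on_def by auto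
  then show ?thesis by (simp add: riesz_def)
qed

lemma strictly_positive_on_perturb:
  assumes "strictly_positive_on m s a b"
  obtains e where "0 < e" "positive_on m (\<lambda>k. s k - e * d k) a b"
proof -
  define e where "e j = inverse (real (Suc j))" for j
  have "\<exists>j. positive_on m (\<lambda>k. s k - e j * d k) a b"
  proof (rule ccontr)
    assume "\<nexists>j. positive_on m (\<lambda>k. s k - e j * d k) a b"
    then have "\<forall>j. \<exists>P. degree P \<le> m \<and> (\<forall>x\<in>{a..b}. 0 \<le> poly P x) \<and> riesz m s P < e j * riesz m d P"
      by (auto simp: positive_on_def riesz_diff_scaled not_le)
    then obtain P where "\<forall>j. degree (P j) \<le> m \<and> (\<forall>x\<in>{a..b}. 0 \<le> poly (P j) x) \<and>
        riesz m s (P j) < e j * riesz m d (P j)"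
      by metis
    then have deg: "\<And>j. degree (P j) \<le> m" and nonneg: "\<And>j. \<forall>x\<in>{a..b}. 0 \<le> poly (P j) x"
      and neg: "\<And>j. riesz m s (P j) < e j * riesz m d (P j)"
      by blast+
    have nz: "P j \<noteq> 0" for j using neg[of j] by auto
    obtain c r Q where c: "\<And>j. 0 < c j" and r: "strict_mono r" and Q: "degree Q \<le> m" "Q \<noteq> 0"
      and lim_poly: "\<And>x. (\<lambda>j. c j * poly (P (r j)) x) \<longlonglongrightarrow> poly Q x"
      and lim_riesz: "\<And>d. (\<lambda>j. c j * riesz m d (P (r j))) \<longlonglongrightarrow> riesz m d Q"
      using nonzero_polys_rescaled_limit[of P m, OF deg nz] by blast
    have "0 \<le> poly Q x" if "x \<in> {a..b}" for x
      using c nonneg that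
      by (intro LIMSEQ_le_const[OF lim_poly] exI allI impI mult_nonneg_nonneg[OF less_imp_le]) auto
    moreover have "riesz m s Q \<le> 0"
    proof (rule LIMSEQ_le[OF lim_riesz])
      have "(\<lambda>j. e (r j)) \<longlonglongrightarrow> 0"
        using LIMSEQ_subseq_LIMSEQ[OF LIMSEQ_inverse_real_of_nat r] by (simp add: e_def o_def)
      then have "(\<lambda>j. e (r j) * (c j * riesz m d (P (r j)))) \<longlonglongrightarrow> 0 * riesz m d Q"
        by (rule tendsto_mult[OF _ lim_riesz])
      then show "(\<lambda>j. e (r j) * (c j * riesz m d (P (r j)))) \<longlonglongrightarrow> 0"
        by simp
      show "\<exists>N. \<forall>j\<ge>N. c j * riesz m s (P (r j)) \<le> e (r j) * (c j * riesz m d (P (r j)))"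
        using neg c by (auto simp: mult.left_commute less_imp_le)
    qed
    ultimately show False
      using assms Q unfolding strictly_positive_on_def by (meson not_le)
  qed
  then obtain j where "positive_on m (\<lambda>k. s k - e j * d k) a b" by blast
  then show thesis
    using that[of "e j"] by (simp add: e_def)
qed

lemma strictly_positive_on_eventually_shrink_left:
  assumes "strictly_positive_on m s a b" "a < b" "a' \<longlonglongrightarrow> a"
  shows "\<exists>j. strictly_positive_on m s (a' j) b"
proof (rule ccontr)
  assume "\<nexists>j. strictly_positive_on m s (a' j) b"
  then have "\<forall>j. \<exists>P. degree P \<le> m \<and> (\<forall>x\<in>{a' j..b}. 0 \<le> poly P x) \<and> P \<noteq> 0 \<and> riesz m s P \<le> 0"
    using strictly_positive_onI[of m "a' _" b s] by (meson not_le)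
  then obtain P where "\<forall>j. degree (P j) \<le> m \<and> (\<forall>x\<in>{a' j..b}. 0 \<le> poly (P j) x) \<and>
      P j \<noteq> 0 \<and> riesz m s (P j) \<le> 0"
    by metis
  then have deg: "\<And>j. degree (P j) \<le> m" and nonneg: "\<And>j. \<forall>x\<in>{a' j..b}. 0 \<le> poly (P j) x"
    and nz: "\<And>j. P j \<noteq> 0" and nonpos: "\<And>j. riesz m s (P j) \<le> 0"
    by blast+
  obtain c r Q where c: "\<And>j. 0 < c j" and r: "strict_mono r" and Q: "degree Q \<le> m" "Q \<noteq> 0"
    and lim_poly: "\<And>x. (\<lambda>j. c j * poly (P (r j)) x) \<longlonglongrightarrow> poly Q x"
    and lim_riesz: "\<And>d. (\<lambda>j. c j * riesz m d (P (r j))) \<longlonglongrightarrow> riesz m d Q"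
    using nonzero_polys_rescaled_limit[of P m, OF deg nz] by blast
  have a'_lim: "(\<lambda>j. a' (r j)) \<longlonglongrightarrow> a"
    using LIMSEQ_subseq_LIMSEQ[OF assms(3) r] by (simp add: o_def)
  have "0 \<le> poly Q x" if "x \<in> {a<..b}" for x
  proof (rule tendsto_lowerbound[OF lim_poly])
    have "\<forall>\<^sub>F j in sequentially. a' (r j) < x"
      using order_tendstoD(2)[OF a'_lim] that by simp
    then show "\<forall>\<^sub>F j in sequentially. 0 \<le> c j * poly (P (r j)) x"
    proof eventually_elim
      case (elim j)
      then show ?case
        using c[of j] nonneg[of "r j"] that by (intro mult_nonneg_nonneg[OF less_imp_le]) auto
    qed
  qed simp
  then have "\<forall>x\<in>{a..b}. 0 \<le> poly Q x"
    using assms(2) by (intro poly_nonneg_atLeastAtMost_if_greaterThanAtMost) auto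
  moreover have "riesz m s Q \<le> 0"
    using c nonpos by (intro LIMSEQ_le_const2[OF lim_riesz]) (auto intro: mult_nonneg_nonpos less_imp_le)
  ultimately show False
    using assms(1) Q unfolding strictly_positive_on_def by fastforce
qed

lemma strictly_positive_on_shrink_left:
  assumes "strictly_positive_on m s a b" "a < b"
  obtains a' where "a < a'" "a' < b" "strictly_positive_on m s a' b"
proof -
  define a' where "a' = (\<lambda>j. a + (b - a) / real (j + 2))"
  have "a' \<longlonglongrightarrow> a + 0"
    unfolding a'_def by (intro tendsto_add tendsto_const LIMSEQ_ignore_initial_segment lim_const_over_n)
  then obtain j where "strictly_positive_on m s (a' j) b"
    using strictly_positive_on_eventually_shrink_left[OF assms] by auto
  moreover have "(b - a) / real (j + 2) < (b - a) / 1"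
    using assms(2) by (intro divide_strict_left_mono) auto
  ultimately show thesis
    using that[of "a' j"] assms(2) by (simp add: a'_def)
qed

lemma strictly_positive_on_0_prepend:
  assumes pos: "positive_on (Suc n) (prepend_seq c s) a b" "0 \<le> a" "b \<le> B" and "c < d"
    and strict: "strictly_positive_on n s a0 b0" "0 < a0" "a0 \<le> b0" "b0 \<le> B"
  shows "strictly_positive_on (Suc n) (prepend_seq d s) 0 B"
proof (rule strictly_positive_onI)
  fix Q :: "real poly"
  assume deg: "degree Q \<le> Suc n" and nonneg: "\<forall>x\<in>{0..B}. 0 \<le> poly Q x" and "Q \<noteq> 0"
  obtain q R where Q: "Q = pCons q R" by (rule pCons_cases)
  have "0 \<le> poly Q 0" using nonneg strict(2-4) by simp
  then have "0 \<le> q" by (simp add: Q)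
  consider "0 < q" | "q = 0" using \<open>0 \<le> q\<close> by linarith
  then show "0 < riesz (Suc n) (prepend_seq d s) Q"
  proof cases
    case 1
    have "0 \<le> riesz (Suc n) (prepend_seq c s) Q"
      using pos deg nonneg unfolding positive_on_def by auto
    moreover have "riesz (Suc n) (prepend_seq d s) Q = (d - c) * q + riesz (Suc n) (prepend_seq c s) Q"
      by (simp add: Q riesz_prepend_seq_pCons algebra_simps)
    ultimately show ?thesis using \<open>c < d\<close> 1 by (simp add: add_pos_nonneg)
  next
    case 2
    have "R \<noteq> 0" "degree R \<le> n" using \<open>Q \<noteq> 0\<close> deg 2 by (auto simp: Q)
    moreover have "0 \<le> poly R x" if "x \<in> {a0..b0}" for x
    proof -
      have "0 \<le> x * poly R x" using nonneg that strict(2,4) 2 by (auto simp: Q)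
      then show ?thesis using that strict(2) by (simp add: zero_le_mult_iff)
    qed
    ultimately have "0 < riesz n s R"
      using strict(1) unfolding strictly_positive_on_def by blast
    then show ?thesis by (simp add: Q 2 riesz_prepend_seq_pCons)
  qed
qed

section \<open>Atomic representations of positive functionals\<close>

definition atomic_moments :: "nat \<Rightarrow> (nat \<Rightarrow> real) \<Rightarrow> real \<Rightarrow> real \<Rightarrow> nat \<Rightarrow> bool" where
  "atomic_moments m v a b N \<longleftrightarrow> (\<exists>w x. (\<forall>i<N. 0 \<le> w i \<and> x i \<in> {a..b}) \<and>
      (\<forall>k\<le>m. v k = (\<Sum>i<N. w i * x i ^ k)))"

lemma power_vectors_dependent:
  fixes x :: "nat \<Rightarrow> real"
  assumes "Suc m < N"
  obtains l where "\<exists>i<N. l i \<noteq> 0" "\<And>k. k \<le> m \<Longrightarrow> (\<Sum>i<N. l i * x i ^ k) = 0"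
proof -
  \<comment> \<open>rows m and m + 1 of A coincide, and its first m + 1 rows are the power vectors\<close>
  define A :: "real mat" where "A = mat N N (\<lambda>(k, i). x i ^ min k m)"
  have A: "A \<in> carrier_mat N N" unfolding A_def by simp
  have "Matrix.row A m = Matrix.row A (Suc m)"
    using assms by (intro eq_vecI) (auto simp: A_def)
  then have "Determinant.det A = 0"
    using assms by (intro det_identical_rows[OF A, of m "Suc m"]) auto
  then obtain v where v: "v \<in> carrier_vec N" "v \<noteq> 0\<^sub>v N" "A *\<^sub>v v = 0\<^sub>v N"
    using det_0_iff_vec_prod_zero_field[OF A] by blast
  show thesis
  proof (rule that[of "\<lambda>i. Matrix.vec_index v i"])
    show "\<exists>i<N. Matrix.vec_index v i \<noteq> 0"
    proof (rule ccontr)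
      assume "\<not> (\<exists>i<N. Matrix.vec_index v i \<noteq> 0)"
      then have "v = 0\<^sub>v N" using v(1) by (intro eq_vecI) auto
      then show False using v(2) by simp
    qed
    fix k assume "k \<le> m"
    then have "(\<Sum>i<N. Matrix.vec_index v i * x i ^ k) = Matrix.vec_index (A *\<^sub>v v) k"
      using assms v(1) unfolding A_def
      by (auto simp: scalar_prod_def mult.commute atLeast0LessThan intro!: sum.cong)
    also have "\<dots> = 0" using v(3) \<open>k \<le> m\<close> assms by simp
    finally show "(\<Sum>i<N. Matrix.vec_index v i * x i ^ k) = 0" .
  qed
qed

lemma nonneg_weights_shift_to_zero:
  fixes w l :: "nat \<Rightarrow> real"
  assumes "\<And>i. i < N \<Longrightarrow> 0 \<le> w i" "i1 < N" "0 < l i1"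
  obtains t i0 where "i0 < N" "\<And>i. i < N \<Longrightarrow> 0 \<le> w i - t * l i" "w i0 - t * l i0 = 0"
proof -
  define I where "I = {i. i < N \<and> 0 < l i}"
  define i0 where "i0 = arg_min_on (\<lambda>i. w i / l i) I"
  have "finite I" "I \<noteq> {}" using assms(2,3) by (auto simp: I_def)
  then have i0: "i0 \<in> I" and min: "\<And>i. i \<in> I \<Longrightarrow> w i0 / l i0 \<le> w i / l i"
    unfolding i0_def using arg_min_if_finite by (blast, meson not_le)
  show thesis
  proof (rule that[of i0 "w i0 / l i0"])
    show "i0 < N" "w i0 - w i0 / l i0 * l i0 = 0" using i0 by (auto simp: I_def)
    fix i assume "i < N"
    show "0 \<le> w i - w i0 / l i0 * l i"
    proof (cases "0 < l i")
      case True
      then show ?thesis using min[of i] \<open>i < N\<close> by (simp add: I_def pos_le_divide_eq)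
    next
      case False
      have "0 \<le> w i0 / l i0" using i0 assms(1) by (auto simp: I_def)
      then have "w i0 / l i0 * l i \<le> 0" using False by (intro mult_nonneg_nonpos) auto
      then show ?thesis using assms(1)[OF \<open>i < N\<close>] by linarith
    qed
  qed
qed

lemma atomic_moments_remove_null_atom:
  assumes "\<forall>i<N. 0 \<le> w i \<and> x i \<in> {a..b}" "\<And>k. k \<le> m \<Longrightarrow> v k = (\<Sum>i<N. w i * x i ^ k)"
    and "i0 < N" "w i0 = 0"
  shows "atomic_moments m v a b (N - 1)"
proof -
  define \<sigma> where "\<sigma> = Transposition.transpose i0 (N - 1)"
  have \<sigma>: "\<sigma> permutes {..<N}" unfolding \<sigma>_def using assms(3) by (intro permutes_swap_id) auto
  have "v k = (\<Sum>i<N - 1. w (\<sigma> i) * x (\<sigma> i) ^ k)" if "k \<le> m" for k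
  proof -
    have "v k = (\<Sum>i<N. w (\<sigma> i) * x (\<sigma> i) ^ k)"
      using assms(2)[OF that] sum.permute[OF \<sigma>] by (simp add: o_def)
    also have "\<dots> = (\<Sum>i<N - 1. w (\<sigma> i) * x (\<sigma> i) ^ k)"
      using assms(3,4) by (cases N) (simp_all add: \<sigma>_def)
    finally show ?thesis .
  qed
  moreover have "\<sigma> i < N" if "i < N - 1" for i
    using permutes_in_image[OF \<sigma>] that by auto
  ultimately show ?thesis
    unfolding atomic_moments_def using assms(1)
    by (intro exI[of _ "w \<circ> \<sigma>"] exI[of _ "x \<circ> \<sigma>"]) auto
qed

lemma atomic_moments_remove_atom:
  assumes "atomic_moments m v a b N" "Suc m < N"
  shows "atomic_moments m v a b (N - 1)"
proof -
  obtain w x where wx: "\<forall>i<N. 0 \<le> w i \<and> x i \<in> {a..b}" "\<And>k. k \<le> m \<Longrightarrow> v k = (\<Sum>i<N. w i * x i ^ k)"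
    using assms(1) unfolding atomic_moments_def by blast
  obtain l where "\<exists>i<N. l i \<noteq> 0" and l: "\<And>k. k \<le> m \<Longrightarrow> (\<Sum>i<N. l i * x i ^ k) = 0"
    using power_vectors_dependent[OF assms(2)] by blast
  then obtain i1 where i1: "i1 < N" "l i1 \<noteq> 0" by blast
  obtain l' where l'_pos: "0 < l' i1" and l': "\<And>k. k \<le> m \<Longrightarrow> (\<Sum>i<N. l' i * x i ^ k) = 0"
  proof (cases "0 < l i1")
    case True
    show thesis by (rule that[of l]) (use True l in auto)
  next
    case False
    show thesis
    proof (rule that[of "\<lambda>i. - l i"])
      show "0 < - l i1" using False i1(2) by linarith
      show "(\<Sum>i<N. - l i * x i ^ k) = 0" if "k \<le> m" for k
        using l[OF that] by (simp add: sum_negf)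
    qed
  qed
  obtain t i0 where i0: "i0 < N" and nonneg: "\<And>i. i < N \<Longrightarrow> 0 \<le> w i - t * l' i"
      and zero: "w i0 - t * l' i0 = 0"
  proof (rule nonneg_weights_shift_to_zero[of N w i1 l'])
    show "\<And>i. i < N \<Longrightarrow> 0 \<le> w i" using wx(1) by blast
  qed (use i1(1) l'_pos in auto)
  have moments: "v k = (\<Sum>i<N. (w i - t * l' i) * x i ^ k)" if "k \<le> m" for k
  proof -
    have "(\<Sum>i<N. (w i - t * l' i) * x i ^ k) = (\<Sum>i<N. w i * x i ^ k) - t * (\<Sum>i<N. l' i * x i ^ k)"
      by (simp add: left_diff_distrib sum_subtractf sum_distrib_left mult.assoc)
    then show ?thesis using wx(2)[OF that] l'[OF that] by simp
  qed
  show ?thesis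
  proof (rule atomic_moments_remove_null_atom[of N "\<lambda>i. w i - t * l' i" x a b m v i0])
    show "\<forall>i<N. 0 \<le> w i - t * l' i \<and> x i \<in> {a..b}" using wx(1) nonneg by auto
  qed (use moments i0 zero in auto)
qed

lemma atomic_moments_mono:
  assumes "atomic_moments m v a b N" "N \<le> M" "a \<le> b"
  shows "atomic_moments m v a b M"
proof -
  obtain w x where wx: "\<forall>i<N. 0 \<le> w i \<and> x i \<in> {a..b}" "\<forall>k\<le>m. v k = (\<Sum>i<N. w i * x i ^ k)"
    using assms(1) unfolding atomic_moments_def by blast
  define w' where "w' i = (if i < N then w i else 0)" for i
  define x' where "x' i = (if i < N then x i else a)" for i
  have "(\<Sum>i<M. w' i * x' i ^ k) = (\<Sum>i<N. w i * x i ^ k)" for k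
  proof -
    have "(\<Sum>i<M. w' i * x' i ^ k) = (\<Sum>i<N. w' i * x' i ^ k)"
      using assms(2) by (intro sum.mono_neutral_right) (auto simp: w'_def)
    then show ?thesis by (simp add: w'_def x'_def)
  qed
  moreover have "\<forall>i<M. 0 \<le> w' i \<and> x' i \<in> {a..b}"
    using wx(1) assms(3) by (simp add: w'_def x'_def)
  ultimately show ?thesis
    unfolding atomic_moments_def using wx(2) by (intro exI[of _ w'] exI[of _ x']) simp
qed

lemma atomic_moments_Caratheodory:
  assumes "atomic_moments m v a b N" "a \<le> b"
  shows "atomic_moments m v a b (Suc m)"
  using assms(1)
proof (induction N)
  case (Suc N)
  show ?case
  proof (cases "Suc N \<le> Suc m")
    case False
    then show ?thesis
      using Suc atomic_moments_remove_atom[OF Suc.prems] by simp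
  qed (use Suc.prems atomic_moments_mono assms(2) in blast)
qed (use atomic_moments_mono assms(2) in blast)

lemma atomic_moments_closed:
  assumes "\<And>j. atomic_moments m (c j) a b N" "\<And>k. k \<le> m \<Longrightarrow> (\<lambda>j. c j k) \<longlonglongrightarrow> v k"
  shows "atomic_moments m v a b N"
proof -
  obtain W X where WX: "\<And>j i. i < N \<Longrightarrow> 0 \<le> W j i \<and> X j i \<in> {a..b}"
    and mom: "\<And>j k. k \<le> m \<Longrightarrow> c j k = (\<Sum>i<N. W j i * X j i ^ k)"
    using assms(1) unfolding atomic_moments_def by metis
  obtain K where K: "\<And>j. \<bar>c j 0\<bar> \<le> K"
    using convergent_imp_Bseq[OF convergentI[OF assms(2)[of 0]]] unfolding Bseq_def by auto
  have W_le: "W j i \<le> K" if "i < N" for i j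
  proof -
    have "W j i \<le> (\<Sum>i<N. W j i)" using WX that by (intro member_le_sum) auto
    also have "\<dots> = c j 0" using mom[of 0 j] by simp
    finally show ?thesis using K[of j] by simp
  qed
  have "bounded (range (\<lambda>j. W j i))" if "i < N" for i
    using WX[OF that] W_le[OF that] by (intro boundedI[of _ K]) auto
  then obtain r w where r: "strict_mono r" and w: "\<And>i. i < N \<Longrightarrow> (\<lambda>j. W (r j) i) \<longlonglongrightarrow> w i"
    using bounded_seqs_common_convergent_subseq[of N "\<lambda>i j. W j i"] by blast
  have "bounded (range (\<lambda>j. X (r j) i))" if "i < N" for i
  proof -
    have "\<bar>X j i\<bar> \<le> \<bar>a\<bar> + \<bar>b\<bar>" for j using WX[OF that, of j] by auto
    then show ?thesis by (intro boundedI[of _ "\<bar>a\<bar> + \<bar>b\<bar>"]) auto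
  qed
  then obtain r' x where r': "strict_mono r'" and x: "\<And>i. i < N \<Longrightarrow> (\<lambda>j. X (r (r' j)) i) \<longlonglongrightarrow> x i"
    using bounded_seqs_common_convergent_subseq[of N "\<lambda>i j. X (r j) i"] by blast
  have w': "(\<lambda>j. W (r (r' j)) i) \<longlonglongrightarrow> w i" if "i < N" for i
    using LIMSEQ_subseq_LIMSEQ[OF w[OF that] r'] by (simp add: o_def)
  have "0 \<le> w i \<and> x i \<in> {a..b}" if "i < N" for i
    using WX[OF that] w'[OF that] x[OF that]
    by (auto intro: LIMSEQ_le_const LIMSEQ_le_const2)
  moreover have "v k = (\<Sum>i<N. w i * x i ^ k)" if "k \<le> m" for k
  proof (rule LIMSEQ_unique)
    show "(\<lambda>j. c (r (r' j)) k) \<longlonglongrightarrow> v k"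
      using LIMSEQ_subseq_LIMSEQ[OF assms(2)[OF that] strict_mono_o[OF r r']] by (simp add: o_def)
    show "(\<lambda>j. c (r (r' j)) k) \<longlonglongrightarrow> (\<Sum>i<N. w i * x i ^ k)"
      unfolding mom[OF that] by (intro tendsto_intros w' x) auto
  qed
  ultimately show ?thesis
    unfolding atomic_moments_def by blast
qed

lemma atomic_moments_scale:
  assumes "atomic_moments m c a b N" "0 \<le> t"
  shows "atomic_moments m (\<lambda>k. t * c k) a b N"
proof -
  obtain w x where "\<forall>i<N. 0 \<le> w i \<and> x i \<in> {a..b}" "\<forall>k\<le>m. c k = (\<Sum>i<N. w i * x i ^ k)"
    using assms(1) unfolding atomic_moments_def by blast
  then show ?thesis
    unfolding atomic_moments_def using assms(2)
    by (intro exI[of _ "\<lambda>i. t * w i"] exI[of _ x]) (simp add: sum_distrib_left mult.assoc)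
qed

lemma atomic_moments_add_atom:
  assumes "atomic_moments m c a b N" "0 \<le> t" "y \<in> {a..b}"
  shows "atomic_moments m (\<lambda>k. c k + t * y ^ k) a b (Suc N)"
proof -
  obtain w x where wx: "\<forall>i<N. 0 \<le> w i \<and> x i \<in> {a..b}" "\<forall>k\<le>m. c k = (\<Sum>i<N. w i * x i ^ k)"
    using assms(1) unfolding atomic_moments_def by blast
  then show ?thesis
    unfolding atomic_moments_def using assms(2,3)
    by (intro exI[of _ "w(N := t)"] exI[of _ "x(N := y)"]) (auto simp: less_Suc_eq)
qed

lemma atomic_moments_bounded_convergent_subseq:
  fixes C :: "nat \<Rightarrow> nat \<Rightarrow> real"
  assumes "\<And>j. atomic_moments m (C j) a b N" "\<And>j k. k \<le> m \<Longrightarrow> \<bar>C j k\<bar> \<le> B k"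
  obtains r l where "strict_mono r" "atomic_moments m l a b N" "\<And>k. k \<le> m \<Longrightarrow> (\<lambda>j. C (r j) k) \<longlonglongrightarrow> l k"
proof -
  have "bounded (range (\<lambda>j. C j k))" if "k < Suc m" for k
    using assms(2) that by (intro boundedI[of _ "B k"]) auto
  then obtain r l where r: "strict_mono r" and l: "\<And>k. k < Suc m \<Longrightarrow> (\<lambda>j. C (r j) k) \<longlonglongrightarrow> l k"
    using bounded_seqs_common_convergent_subseq[of "Suc m" "\<lambda>k j. C j k"] by blast
  have "atomic_moments m l a b N"
    by (rule atomic_moments_closed[of m "\<lambda>j. C (r j)"]) (use assms(1) l in auto)
  then show thesis
    using that r l by simp
qed

lemma atomic_moments_nearest:
  assumes "a \<le> b"
  obtains l where "atomic_moments m l a b (Suc m)"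
    "\<And>c N. atomic_moments m c a b N \<Longrightarrow> (\<Sum>k\<le>m. (v k - l k)\<^sup>2) \<le> (\<Sum>k\<le>m. (v k - c k)\<^sup>2)"
proof -
  define D where "D c = (\<Sum>k\<le>m. (v k - c k)\<^sup>2)" for c
  define K where "K = {c. atomic_moments m c a b (Suc m)}"
  have "(\<lambda>_. 0) \<in> K"
    unfolding K_def atomic_moments_def using assms by (intro CollectI exI[of _ "\<lambda>_. 0"] exI[of _ "\<lambda>_. a"]) auto
  moreover have bdd: "bdd_below (D ` K)"
    unfolding D_def by (intro bdd_belowI[of _ 0]) (auto intro: sum_nonneg)
  ultimately obtain C where "\<And>j. C j \<in> K" and lim_D: "(\<lambda>j. D (C j)) \<longlonglongrightarrow> Inf (D ` K)"
    using Inf_image_approximating_seq[of _ K D] by blast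
  then have CK: "\<And>j. atomic_moments m (C j) a b (Suc m)" by (simp add: K_def)
  obtain M where M: "\<And>j. \<bar>D (C j)\<bar> \<le> M"
    using convergent_imp_Bseq[OF convergentI[OF lim_D]] unfolding Bseq_def by auto
  have C_bounded: "\<bar>C j k\<bar> \<le> \<bar>v k\<bar> + sqrt M" if "k \<le> m" for j k
  proof -
    have "\<bar>v k - C j k\<bar>\<^sup>2 \<le> D (C j)"
      unfolding D_def power2_abs using that by (intro member_le_sum) auto
    then have "\<bar>v k - C j k\<bar>\<^sup>2 \<le> M" using M[of j] by linarith
    then have "\<bar>v k - C j k\<bar> \<le> sqrt M" by (rule real_le_rsqrt)
    then show ?thesis by arith
  qed
  obtain r l where r: "strict_mono r" and l: "atomic_moments m l a b (Suc m)"
    and lim: "\<And>k. k \<le> m \<Longrightarrow> (\<lambda>j. C (r j) k) \<longlonglongrightarrow> l k"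
    using atomic_moments_bounded_convergent_subseq[of m C a b "Suc m" "\<lambda>k. \<bar>v k\<bar> + sqrt M", OF CK C_bounded]
    by blast
  have "D l = Inf (D ` K)"
  proof (rule LIMSEQ_unique)
    show "(\<lambda>j. D (C (r j))) \<longlonglongrightarrow> D l"
      unfolding D_def by (intro tendsto_intros lim) auto
    show "(\<lambda>j. D (C (r j))) \<longlonglongrightarrow> Inf (D ` K)"
      using LIMSEQ_subseq_LIMSEQ[OF lim_D r] by (simp add: o_def)
  qed
  show thesis
  proof (rule that[OF l])
    fix c N assume "atomic_moments m c a b N"
    then have "c \<in> K" unfolding K_def using atomic_moments_Caratheodory assms by blast
    then show "(\<Sum>k\<le>m. (v k - l k)\<^sup>2) \<le> (\<Sum>k\<le>m. (v k - c k)\<^sup>2)"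
      using \<open>D l = Inf (D ` K)\<close> bdd cInf_lower[of "D c" "D ` K"] by (simp add: D_def)
  qed
qed

lemma nonneg_if_nonneg_quadratic_near_0:
  fixes \<alpha> \<beta> :: real
  assumes "\<And>t. 0 < t \<Longrightarrow> t \<le> 1 \<Longrightarrow> 0 \<le> t * \<alpha> + t\<^sup>2 * \<beta>"
  shows "0 \<le> \<alpha>"
proof (rule tendsto_lowerbound)
  show "((\<lambda>t. \<alpha> + t * \<beta>) \<longlongrightarrow> \<alpha>) (at_right 0)"
    by (auto intro!: tendsto_eq_intros)
  have "0 \<le> \<alpha> + t * \<beta>" if "0 < t" "t < 1" for t
  proof -
    have "0 \<le> t * (\<alpha> + t * \<beta>)"
      using assms[of t] that by (simp add: power2_eq_square algebra_simps)
    then show ?thesis using that by (simp add: zero_le_mult_iff)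
  qed
  then show "\<forall>\<^sub>F t in at_right 0. 0 \<le> \<alpha> + t * \<beta>"
    unfolding eventually_at_right_field by (intro exI[of _ 1]) auto
qed simp

lemma nearest_point_variation:
  fixes v l u :: "nat \<Rightarrow> real"
  assumes nearest: "\<And>c. c \<in> K \<Longrightarrow> (\<Sum>k\<le>m. (v k - l k)\<^sup>2) \<le> (\<Sum>k\<le>m. (v k - c k)\<^sup>2)"
    and admissible: "\<And>t. 0 < t \<Longrightarrow> t \<le> 1 \<Longrightarrow> (\<lambda>k. l k + t * u k) \<in> K"
  shows "0 \<le> (\<Sum>k\<le>m. (l k - v k) * u k)"
proof -
  have "0 \<le> 2 * (\<Sum>k\<le>m. (l k - v k) * u k)"
  proof (rule nonneg_if_nonneg_quadratic_near_0)
    fix t :: real assume "0 < t" "t \<le> 1"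
    then have "(\<Sum>k\<le>m. (v k - l k)\<^sup>2) \<le> (\<Sum>k\<le>m. (v k - (l k + t * u k))\<^sup>2)"
      using nearest admissible by blast
    moreover have "(\<Sum>k\<le>m. (v k - (l k + t * u k))\<^sup>2) =
        (\<Sum>k\<le>m. (v k - l k)\<^sup>2 + (t * (2 * ((l k - v k) * u k)) + t\<^sup>2 * (u k)\<^sup>2))"
      by (intro sum.cong) (simp_all add: power2_eq_square algebra_simps)
    moreover have "(\<Sum>k\<le>m. (v k - l k)\<^sup>2 + (t * (2 * ((l k - v k) * u k)) + t\<^sup>2 * (u k)\<^sup>2)) =
        (\<Sum>k\<le>m. (v k - l k)\<^sup>2) + (t * (2 * (\<Sum>k\<le>m. (l k - v k) * u k)) + t\<^sup>2 * (\<Sum>k\<le>m. (u k)\<^sup>2))"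
      by (simp add: sum.distrib sum_distrib_left)
    ultimately show "0 \<le> t * (2 * (\<Sum>k\<le>m. (l k - v k) * u k)) + t\<^sup>2 * (\<Sum>k\<le>m. (u k)\<^sup>2)"
      by linarith
  qed
  then show ?thesis by simp
qed

lemma atomic_moments_nearest_normal:
  assumes l: "atomic_moments m l a b N"
    and nearest: "\<And>c N. atomic_moments m c a b N \<Longrightarrow> (\<Sum>k\<le>m. (v k - l k)\<^sup>2) \<le> (\<Sum>k\<le>m. (v k - c k)\<^sup>2)"
  shows "(\<Sum>k\<le>m. (l k - v k) * l k) = 0"
    and "\<And>y. y \<in> {a..b} \<Longrightarrow> 0 \<le> (\<Sum>k\<le>m. (l k - v k) * y ^ k)"
proof -
  define K where "K = {c. \<exists>N. atomic_moments m c a b N}"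
  have nearest_K: "\<And>c. c \<in> K \<Longrightarrow> (\<Sum>k\<le>m. (v k - l k)\<^sup>2) \<le> (\<Sum>k\<le>m. (v k - c k)\<^sup>2)"
    using nearest unfolding K_def by blast
  have scaled: "(\<lambda>k. t * l k) \<in> K" if "0 \<le> t" for t
    using atomic_moments_scale[OF l that] unfolding K_def by blast
  have "0 \<le> (\<Sum>k\<le>m. (l k - v k) * l k)"
  proof (rule nearest_point_variation[OF nearest_K])
    fix t :: real assume "0 < t"
    then show "(\<lambda>k. l k + t * l k) \<in> K" using scaled[of "1 + t"] by (simp add: algebra_simps)
  qed
  moreover have "0 \<le> (\<Sum>k\<le>m. (l k - v k) * - l k)"
  proof (rule nearest_point_variation[OF nearest_K])
    fix t :: real assume "t \<le> 1"
    then show "(\<lambda>k. l k + t * - l k) \<in> K" using scaled[of "1 - t"] by (simp add: algebra_simps)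
  qed
  ultimately show normal: "(\<Sum>k\<le>m. (l k - v k) * l k) = 0"
    by (simp add: sum_negf)
  fix y assume "y \<in> {a..b}"
  have "0 \<le> (\<Sum>k\<le>m. (l k - v k) * (y ^ k - l k))"
  proof (rule nearest_point_variation[OF nearest_K])
    fix t :: real assume "0 < t" "t \<le> 1"
    then have "(\<lambda>k. (1 - t) * l k + t * y ^ k) \<in> K"
      using atomic_moments_add_atom[OF atomic_moments_scale[OF l], of "1 - t" t y] \<open>y \<in> {a..b}\<close>
      unfolding K_def by auto
    then show "(\<lambda>k. l k + t * (y ^ k - l k)) \<in> K"
      by (simp add: algebra_simps)
  qed
  then show "0 \<le> (\<Sum>k\<le>m. (l k - v k) * y ^ k)"
    using normal by (simp add: right_diff_distrib sum_subtractf)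
qed

lemma positive_on_imp_atomic_moments:
  assumes "a \<le> b" "positive_on m v a b"
  shows "atomic_moments m v a b (Suc m)"
proof -
  obtain l where l: "atomic_moments m l a b (Suc m)"
    and nearest: "\<And>c N. atomic_moments m c a b N \<Longrightarrow> (\<Sum>k\<le>m. (v k - l k)\<^sup>2) \<le> (\<Sum>k\<le>m. (v k - c k)\<^sup>2)"
    using atomic_moments_nearest[OF assms(1)] by blast
  define p where "p k = l k - v k" for k
  have normal: "(\<Sum>k\<le>m. p k * l k) = 0"
    using atomic_moments_nearest_normal(1)[OF l nearest] by (simp add: p_def)
  have "0 \<le> poly (poly_of_coeffs m p) y" if "y \<in> {a..b}" for y
    using atomic_moments_nearest_normal(2)[OF l nearest that] by (simp add: p_def poly_poly_of_coeffs)
  then have "0 \<le> riesz m v (poly_of_coeffs m p)"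
    using assms(2) degree_poly_of_coeffs unfolding positive_on_def by blast
  also have "riesz m v (poly_of_coeffs m p) = (\<Sum>k\<le>m. p k * l k - (p k)\<^sup>2)"
    unfolding riesz_poly_of_coeffs p_def by (intro sum.cong) (simp_all add: power2_eq_square algebra_simps)
  also have "\<dots> = - (\<Sum>k\<le>m. (p k)\<^sup>2)"
    using normal by (simp add: sum_subtractf)
  finally have "(\<Sum>k\<le>m. (p k)\<^sup>2) = 0"
    by (simp add: sum_nonneg order_antisym)
  then have "\<And>k. k \<le> m \<Longrightarrow> v k = l k"
    by (simp add: sum_nonneg_eq_0_iff p_def)
  then show ?thesis
    using l unfolding atomic_moments_def by simp
qed

section \<open>Measures with finitely many atoms\<close>

definition point_masses :: "nat \<Rightarrow> (nat \<Rightarrow> real) \<Rightarrow> (nat \<Rightarrow> real) \<Rightarrow> real measure" where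
  "point_masses N u x = distr (density (count_space {..<N}) (\<lambda>i. ennreal (u i))) borel x"

lemma sets_point_masses [measurable_cong]: "sets (point_masses N u x) = sets borel"
  unfolding point_masses_def by simp

lemma nn_integral_point_masses:
  assumes "g \<in> borel_measurable borel"
  shows "(\<integral>\<^sup>+y. g y \<partial>point_masses N u x) = (\<Sum>i<N. ennreal (u i) * g (x i))"
  unfolding point_masses_def using assms
  by (simp add: nn_integral_distr nn_integral_density nn_integral_count_space_finite)

lemma emeasure_point_masses:
  assumes "A \<in> sets borel"
  shows "emeasure (point_masses N u x) A = (\<Sum>i<N. ennreal (u i) * indicator A (x i))"
  using nn_integral_point_masses[of "indicator A" N u x] assms
  by (simp add: nn_integral_indicator sets_point_masses)

lemma
  fixes f :: "real \<Rightarrow> real"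
  assumes "\<And>i. i < N \<Longrightarrow> 0 \<le> u i" "f \<in> borel_measurable borel"
  shows integrable_point_masses: "integrable (point_masses N u x) f"
    and integral_point_masses: "(\<integral>y. f y \<partial>point_masses N u x) = (\<Sum>i<N. u i * f (x i))"
  unfolding point_masses_def using assms
  by (auto simp: integrable_distr_eq integral_distr integrable_density integral_density
      AE_count_space integrable_count_space lebesgue_integral_count_space_finite)

lemma point_masses_in_moment_measures:
  assumes "\<And>i. i < N \<Longrightarrow> 0 \<le> u i \<and> x i \<in> {a..b}" "\<And>k. k \<le> n \<Longrightarrow> s k = (\<Sum>i<N. u i * x i ^ k)"
  shows "point_masses N u x \<in> moment_measures n s a b"
  unfolding moment_measures_def
proof (intro CollectI conjI allI impI)
  show "sets (point_masses N u x) = sets borel" by (rule sets_point_masses)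
  show "emeasure (point_masses N u x) (- {a..b}) = 0"
    using assms(1) by (simp add: emeasure_point_masses)
  fix k assume "k \<le> n"
  show "integrable (point_masses N u x) (\<lambda>y. y ^ k)"
    using assms(1) by (intro integrable_point_masses) auto
  show "(\<integral>y. y ^ k \<partial>point_masses N u x) = s k"
    using assms \<open>k \<le> n\<close> by (subst integral_point_masses) auto
qed

lemma t_ab_le_if_atomic_moments_prepend:
  assumes "0 < a" "atomic_moments (Suc n) (prepend_seq c s) a b N"
  shows "t_ab n s a b \<le> ennreal c"
proof -
  obtain w x where wx: "\<And>i. i < N \<Longrightarrow> 0 \<le> w i \<and> x i \<in> {a..b}"
    and mom: "\<And>k. k \<le> Suc n \<Longrightarrow> prepend_seq c s k = (\<Sum>i<N. w i * x i ^ k)"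
    using assms(2) unfolding atomic_moments_def by blast
  have x_pos: "0 < x i" if "i < N" for i using wx[OF that] assms(1) by auto
  \<comment> \<open>reweighting the atoms by x shifts the moment sequence by one index\<close>
  define \<mu> where "\<mu> = point_masses N (\<lambda>i. w i * x i) x"
  have "\<mu> \<in> moment_measures n s a b"
    unfolding \<mu>_def
  proof (rule point_masses_in_moment_measures)
    show "0 \<le> w i * x i \<and> x i \<in> {a..b}" if "i < N" for i
      using wx[OF that] x_pos[OF that] by simp
    show "s k = (\<Sum>i<N. w i * x i * x i ^ k)" if "k \<le> n" for k
      using mom[of "Suc k"] that by (simp add: prepend_seq_def mult.assoc)
  qed
  moreover have "(\<integral>\<^sup>+y\<in>{a..b}. ennreal (1 / y) \<partial>\<mu>) = ennreal c"
  proof -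
    have "(\<integral>\<^sup>+y\<in>{a..b}. ennreal (1 / y) \<partial>\<mu>) =
        (\<Sum>i<N. ennreal (w i * x i) * (ennreal (1 / x i) * indicator {a..b} (x i)))"
      unfolding \<mu>_def by (rule nn_integral_point_masses) measurable
    also have "\<dots> = (\<Sum>i<N. ennreal (w i))"
    proof (intro sum.cong refl)
      fix i assume "i \<in> {..<N}"
      then have "0 \<le> w i" "0 < x i" "x i \<in> {a..b}" using wx x_pos by auto
      then show "ennreal (w i * x i) * (ennreal (1 / x i) * indicator {a..b} (x i)) = ennreal (w i)"
        by (simp flip: ennreal_mult)
    qed
    also have "\<dots> = ennreal (\<Sum>i<N. w i)"
      using wx by (intro sum_ennreal) auto
    also have "(\<Sum>i<N. w i) = c"
      using mom[of 0] by (simp add: prepend_seq_def)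
    finally show ?thesis .
  qed
  ultimately show ?thesis
    unfolding t_ab_def by (intro INF_lower2) auto
qed

lemma
  fixes R :: "real poly"
  assumes "\<mu> \<in> moment_measures n s a b" "degree R \<le> n"
  shows integrable_poly_moment_measure: "integrable \<mu> (poly R)"
    and integral_poly_moment_measure: "(\<integral>x. poly R x \<partial>\<mu>) = riesz n s R"
proof -
  have mom: "\<And>k. k \<le> n \<Longrightarrow> integrable \<mu> (\<lambda>x. x ^ k) \<and> (\<integral>x. x ^ k \<partial>\<mu>) = s k"
    using assms(1) unfolding moment_measures_def by blast
  have R: "poly R = (\<lambda>x. \<Sum>k\<le>n. coeff R k * x ^ k)"
    using poly_eq_sum_coeff[OF assms(2)] by blast
  show "integrable \<mu> (poly R)"
    unfolding R using mom by (auto intro!: Bochner_Integration.integrable_sum integrable_mult_right)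
  show "(\<integral>x. poly R x \<partial>\<mu>) = riesz n s R"
    unfolding R using mom
    by (subst Bochner_Integration.integral_sum) (auto simp: riesz_def intro!: integrable_mult_right)
qed

lemma
  assumes \<mu>: "\<mu> \<in> moment_measures n s a b" and "0 < a"
    and c: "(\<integral>\<^sup>+x\<in>{a..b}. ennreal (1 / x) \<partial>\<mu>) = ennreal c" "0 \<le> c"
  shows integrable_inverse_moment_measure: "integrable \<mu> (\<lambda>x. indicator {a..b} x / x)"
    and integral_inverse_moment_measure: "(\<integral>x. indicator {a..b} x / x \<partial>\<mu>) = c"
proof -
  define g where "g x = indicator {a..b} x / x" for x :: real
  have g_nonneg: "0 \<le> g x" for x using \<open>0 < a\<close> by (auto simp: g_def indicator_def)
  have sets: "sets \<mu> = sets borel" using \<mu> unfolding moment_measures_def by auto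
  have "integrable \<mu> g"
  proof (rule Bochner_Integration.integrable_bound)
    show "integrable \<mu> (\<lambda>x. 1 / a * x ^ 0)"
      using \<mu> unfolding moment_measures_def by auto
    show "g \<in> borel_measurable \<mu>"
      unfolding g_def using sets by (simp add: measurable_def)
    show "AE x in \<mu>. norm (g x) \<le> norm (1 / a * x ^ 0)"
      using \<open>0 < a\<close> by (intro AE_I2) (auto simp: g_def indicator_def frac_le)
  qed
  moreover have "(\<integral>\<^sup>+x. ennreal (g x) \<partial>\<mu>) = ennreal c"
    unfolding c(1)[symmetric] by (intro nn_integral_cong) (auto simp: g_def indicator_def)
  ultimately have "(\<integral>x. g x \<partial>\<mu>) = c"
    using nn_integral_eq_integral[of \<mu> g] g_nonneg c(2) by (simp add: integral_nonneg)
  then show "integrable \<mu> (\<lambda>x. indicator {a..b} x / x)" "(\<integral>x. indicator {a..b} x / x \<partial>\<mu>) = c"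
    using \<open>integrable \<mu> g\<close> by (simp_all add: g_def[abs_def])
qed

lemma positive_on_prepend_if_moment_measure:
  assumes \<mu>: "\<mu> \<in> moment_measures n s a b" and "0 < a"
    and c: "(\<integral>\<^sup>+x\<in>{a..b}. ennreal (1 / x) \<partial>\<mu>) = ennreal c" "0 \<le> c"
  shows "positive_on (Suc n) (prepend_seq c s) a b"
  unfolding positive_on_def
proof (intro allI impI, elim conjE)
  fix Q :: "real poly"
  assume deg: "degree Q \<le> Suc n" and nonneg: "\<forall>x\<in>{a..b}. 0 \<le> poly Q x"
  obtain q R where Q: "Q = pCons q R" by (rule pCons_cases)
  have deg_R: "degree R \<le> n" using deg by (cases "R = 0") (auto simp: Q)
  define g where "g x = indicator {a..b} x / x" for x :: real
  define f where "f x = q * g x + poly R x" for x :: real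
  have g: "integrable \<mu> g" "(\<integral>x. g x \<partial>\<mu>) = c"
    unfolding g_def
    using integrable_inverse_moment_measure[OF \<mu> \<open>0 < a\<close> c] integral_inverse_moment_measure[OF \<mu> \<open>0 < a\<close> c]
    by auto
  have "emeasure \<mu> (- {a..b}) = 0" "sets \<mu> = sets borel"
    using \<mu> unfolding moment_measures_def by auto
  then have "AE x in \<mu>. x \<in> {a..b}"
    by (intro AE_I'[of "- {a..b}"]) (auto simp: null_sets_def)
  then have "AE x in \<mu>. 0 \<le> f x"
  proof (rule AE_mp, intro AE_I2 impI)
    fix x assume x: "x \<in> {a..b}"
    then have "0 < x" using \<open>0 < a\<close> by auto
    then have "x * f x = poly Q x"
      using x by (simp add: Q f_def g_def algebra_simps)
    then show "0 \<le> f x"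
      using nonneg x \<open>0 < x\<close> by (metis zero_le_mult_iff not_less)
  qed
  then have "0 \<le> (\<integral>x. f x \<partial>\<mu>)"
    by (rule integral_nonneg_AE)
  also have "(\<integral>x. f x \<partial>\<mu>) = q * c + riesz n s R"
    unfolding f_def using g integrable_poly_moment_measure[OF \<mu> deg_R] integral_poly_moment_measure[OF \<mu> deg_R]
    by (subst Bochner_Integration.integral_add) auto
  also have "\<dots> = riesz (Suc n) (prepend_seq c s) Q"
    by (simp add: Q riesz_prepend_seq_pCons)
  finally show "0 \<le> riesz (Suc n) (prepend_seq c s) Q" .
qed

lemma t_inf_less_if_strictly_positive_prepend:
  assumes "strictly_positive_pos_reals (Suc n) (prepend_seq sm1 s)"
  shows "t_inf n s < ennreal sm1"
proof -
  obtain a b where ab: "0 < a" "a < b" and strict: "strictly_positive_on (Suc n) (prepend_seq sm1 s) a b"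
    using assms unfolding strictly_positive_pos_reals_def by blast
  obtain e where "0 < e" and "positive_on (Suc n) (\<lambda>k. prepend_seq sm1 s k - e * prepend_seq 1 (\<lambda>_. 0) k) a b"
    using strictly_positive_on_perturb[OF strict] by blast
  moreover have "(\<lambda>k. prepend_seq sm1 s k - e * prepend_seq 1 (\<lambda>_. 0) k) = prepend_seq (sm1 - e) s"
    by (auto simp: prepend_seq_def)
  ultimately have "positive_on (Suc n) (prepend_seq (sm1 - e) s) a b" by simp
  then have "atomic_moments (Suc n) (prepend_seq (sm1 - e) s) a b (Suc (Suc n))"
    using ab by (intro positive_on_imp_atomic_moments) auto
  then have "t_ab n s a b \<le> ennreal (sm1 - e)"
    by (rule t_ab_le_if_atomic_moments_prepend[OF ab(1)])
  moreover have "t_inf n s \<le> t_ab n s a b"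
    unfolding t_inf_def using ab by (intro INF_lower2[of "(a, b)"]) auto
  moreover have "ennreal (sm1 - e) < ennreal sm1"
    using strictly_positive_on_imp_pos_0[OF strict] \<open>0 < e\<close> by (intro ennreal_lessI) (auto simp: prepend_seq_def)
  ultimately show ?thesis by order
qed

lemma strictly_positive_prepend_if_t_inf_less:
  assumes "strictly_positive_pos_reals n s" "t_inf n s < ennreal sm1"
  shows "strictly_positive_pos_reals (Suc n) (prepend_seq sm1 s)"
proof -
  obtain a b where ab: "0 < a" "a < b" and "t_ab n s a b < ennreal sm1"
    using assms(2) unfolding t_inf_def by (auto simp: INF_less_iff)
  then obtain \<mu> where \<mu>: "\<mu> \<in> moment_measures n s a b"
    and "(\<integral>\<^sup>+x\<in>{a..b}. ennreal (1 / x) \<partial>\<mu>) < ennreal sm1"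
    unfolding t_ab_def by (auto simp: INF_less_iff)
  then obtain c where c: "(\<integral>\<^sup>+x\<in>{a..b}. ennreal (1 / x) \<partial>\<mu>) = ennreal c" "0 \<le> c" "c < sm1"
    by (cases "\<integral>\<^sup>+x\<in>{a..b}. ennreal (1 / x) \<partial>\<mu>" rule: ennreal_cases) (auto simp: ennreal_less_iff)
  obtain a0 b0 where "0 < a0" "a0 < b0" and strict: "strictly_positive_on n s a0 b0"
    using assms(1) unfolding strictly_positive_pos_reals_def by blast
  have "strictly_positive_on (Suc n) (prepend_seq sm1 s) 0 (max b b0)"
    using positive_on_prepend_if_moment_measure[OF \<mu> ab(1) c(1,2)] strict \<open>0 < a0\<close> \<open>a0 < b0\<close> ab c(3)
    by (intro strictly_positive_on_0_prepend) auto
  then obtain a' where "0 < a'" "a' < max b b0" "strictly_positive_on (Suc n) (prepend_seq sm1 s) a' (max b b0)"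
    by (rule strictly_positive_on_shrink_left) (use ab in auto)
  then show ?thesis
    unfolding strictly_positive_pos_reals_def by blast
qed

theorem theorem5p4:
  fixes n :: nat and s :: "nat \<Rightarrow> real" and sm1 :: real
  assumes "\<forall>k\<le>n. 0 \<le> s k"
    and "strictly_positive_pos_reals n s"
    and "0 \<le> sm1"
  shows "strictly_positive_pos_reals (Suc n) (prepend_seq sm1 s) \<longleftrightarrow>
           t_inf n s < ennreal sm1"
  using t_inf_less_if_strictly_positive_prepend strictly_positive_prepend_if_t_inf_less assms(2)
  by blast

end
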